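(* Let $W$ be a periodic infinite word with a period of length $N$ (i.e. $W=uuu\cdots$ with $|u|=N$). Then every Rauzy scheme for $W$ has scale strictly less than $N$.
   Context: $u\sqsubseteq w$: $u$ is a factor of $w$; $u\sqsubseteq_k w$: $u$ occurs in $w$ at least $k$ times. A graph with words is a strongly connected finite directed graph (multiple edges and loops allowed) in which every edge $e$ carries a front word $F(e)$ and a back word $B(e)$, and every vertex either has in-degree $1$ and out-degree $>1$ (distributing vertex) or in-degree $>1$ and out-degree $1$ (collecting vertex). A path is a finite nonempty sequence of edges $v_1\dots v_n$ with each $v_{i+1}$ starting where $v_i$ ends; subpaths and $s_1\sqsubseteq_k s_2$ are defined via edge records. A path is symmetric if its first edge starts at a collecting vertex and its last edge ends at a distributing vertex. For $s=v_1\dots v_n$, $F(s)$ is the concatenation, in order, of the front words of $v_1$ and of all $v_i$ ($i\ge2$) starting at a distributing vertex; $B(s)$ is the concatenation, in order, of the back words of all $v_i$ ($i\le n-1$) ending at a collecting vertex and of $v_n$. A Rauzy scheme for $W$ is a graph with words such that: (1) it has more than one edge; (2) front words of edges leaving a common distributing vertex have pairwise distinct first letters, and back words of edges entering a common collecting vertex have pairwise distinct last letters; (3) $F(s)=B(s)$ for every symmetric path $s$; (4) for symmetric paths $s_1,s_2$ and $k\ge1$, $F(s_1)\sqsubseteq_k F(s_2)$ implies $s_1\sqsubseteq_k s_2$; (5) all words on edges are factors of $W$; (6) every factor of $W$ is a factor of $F(s)$ for some symmetric path $s$; (7) for every edge $e$ there is a factor $u_e$ of $W$ such that every symmetric path $s$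 with $u_e\sqsubseteq F(s)$ passes through $e$. A support edge is an edge from a collecting vertex to a distributing vertex; the scale of $S$ is the minimum of $|F(v)|$ over support edges $v$. *)

theory Defs
  imports "HOL-Library.Sublist"
begin

definition factor_of_inf :: "'a list \<Rightarrow> (nat \<Rightarrow> 'a) \<Rightarrow> bool" where
  "factor_of_inf u W \<longleftrightarrow> (\<exists>i. u = map W [i..<i + length u])"

definition occ :: "'b list \<Rightarrow> 'b list \<Rightarrow> nat" where
  "occ u w = card {i. i + length u \<le> length w \<and> take (length u) (drop i w) = u}"

definition occurs_k :: "'b list \<Rightarrow> nat \<Rightarrow> 'b list \<Rightarrow> bool" where
  "occurs_k u k w \<longleftrightarrow> occ u w \<ge> k"

definition periodic_with :: "(nat \<Rightarrow> 'a) \<Rightarrow> nat \<Rightarrow> bool" where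
  "periodic_with W N \<longleftrightarrow> N > 0 \<and> (\<forall>i. W (i + N) = W i)"

definition indeg :: "'v set \<Rightarrow> 'e set \<Rightarrow> ('e \<Rightarrow> 'v) \<Rightarrow> ('e \<Rightarrow> 'v) \<Rightarrow> 'v \<Rightarrow> nat" where
  "indeg V E src tgt v = card {e\<in>E. tgt e = v}"

definition outdeg :: "'v set \<Rightarrow> 'e set \<Rightarrow> ('e \<Rightarrow> 'v) \<Rightarrow> ('e \<Rightarrow> 'v) \<Rightarrow> 'v \<Rightarrow> nat" where
  "outdeg V E src tgt v = card {e\<in>E. src e = v}"

definition distributing where
  "distributing V E src tgt v \<longleftrightarrow> indeg V E src tgt v = 1 \<and> outdeg V E src tgt v > 1"

definition collecting where
  "collecting V E src tgt v \<longleftrightarrow> indeg V E src tgt v > 1 \<and> outdeg V E src tgt v = 1"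

definition is_path :: "'e set \<Rightarrow> ('e \<Rightarrow> 'v) \<Rightarrow> ('e \<Rightarrow> 'v) \<Rightarrow> 'e list \<Rightarrow> bool" where
  "is_path E src tgt p \<longleftrightarrow> p \<noteq> [] \<and> set p \<subseteq> E \<and>
     (\<forall>i. i + 1 < length p \<longrightarrow> tgt (p ! i) = src (p ! (i + 1)))"

definition strongly_connected :: "'v set \<Rightarrow> 'e set \<Rightarrow> ('e \<Rightarrow> 'v) \<Rightarrow> ('e \<Rightarrow> 'v) \<Rightarrow> bool" where
  "strongly_connected V E src tgt \<longleftrightarrow>
     (\<forall>u\<in>V. \<forall>v\<in>V. u = v \<or>
        (\<exists>p. is_path E src tgt p \<and> src (hd p) = u \<and> tgt (last p) = v))"

definition graph_with_words ::
  "'v set \<Rightarrow> 'e set \<Rightarrow> ('e \<Rightarrow> 'v) \<Rightarrow> ('e \<Rightarrow> 'v) \<Rightarrow> bool" where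
  "graph_with_words V E src tgt \<longleftrightarrow>
     finite V \<and> finite E \<and> (\<forall>e\<in>E. src e \<in> V \<and> tgt e \<in> V) \<and>
     strongly_connected V E src tgt \<and>
     (\<forall>v\<in>V. distributing V E src tgt v \<or> collecting V E src tgt v)"

definition symmetric_path where
  "symmetric_path V E src tgt p \<longleftrightarrow> is_path E src tgt p \<and>
     collecting V E src tgt (src (hd p)) \<and> distributing V E src tgt (tgt (last p))"

definition Fpath where
  "Fpath V E src tgt F p = F (hd p) @
     concat (map F (filter (\<lambda>e. distributing V E src tgt (src e)) (tl p)))"

definition Bpath where
  "Bpath V E src tgt B p =
     concat (map B (filter (\<lambda>e. collecting V E src tgt (tgt e)) (butlast p))) @ B (last p)"

definition rauzy_scheme ::
  "(nat \<Rightarrow> 'a) \<Rightarrow> 'v set \<Rightarrow> 'e set \<Rightarrow> ('e \<Rightarrow> 'v) \<Rightarrow> ('e \<Rightarrow> 'v) \<Rightarrow>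
   ('e \<Rightarrow> 'a list) \<Rightarrow> ('e \<Rightarrow> 'a list) \<Rightarrow> bool" where
  "rauzy_scheme W V E src tgt F B \<longleftrightarrow>
     graph_with_words V E src tgt \<and>
     \<comment> \<open>(1)\<close>
     card E > 1 \<and>
     \<comment> \<open>(2)\<close>
     (\<forall>v\<in>V. distributing V E src tgt v \<longrightarrow>
        (\<forall>e1\<in>E. \<forall>e2\<in>E. src e1 = v \<and> src e2 = v \<and> e1 \<noteq> e2 \<longrightarrow>
           F e1 \<noteq> [] \<and> F e2 \<noteq> [] \<and> hd (F e1) \<noteq> hd (F e2))) \<and>
     (\<forall>v\<in>V. collecting V E src tgt v \<longrightarrow>
        (\<forall>e1\<in>E. \<forall>e2\<in>E. tgt e1 = v \<and> tgt e2 = v \<and> e1 \<noteq> e2 \<longrightarrow>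
           B e1 \<noteq> [] \<and> B e2 \<noteq> [] \<and> last (B e1) \<noteq> last (B e2))) \<and>
     \<comment> \<open>(3)\<close>
     (\<forall>s. symmetric_path V E src tgt s \<longrightarrow> Fpath V E src tgt F s = Bpath V E src tgt B s) \<and>
     \<comment> \<open>(4)\<close>
     (\<forall>s1 s2 k. symmetric_path V E src tgt s1 \<and> symmetric_path V E src tgt s2 \<and> k \<ge> 1 \<and>
        occurs_k (Fpath V E src tgt F s1) k (Fpath V E src tgt F s2) \<longrightarrow> occurs_k s1 k s2) \<and>
     \<comment> \<open>(5)\<close>
     (\<forall>e\<in>E. factor_of_inf (F e) W \<and> factor_of_inf (B e) W) \<and>
     \<comment> \<open>(6)\<close>
     (\<forall>u. factor_of_inf u W \<longrightarrow>
        (\<exists>s. symmetric_path V E src tgt s \<and> sublist u (Fpath V E src tgt F s))) \<and>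
     \<comment> \<open>(7)\<close>
     (\<forall>e\<in>E. \<exists>u. factor_of_inf u W \<and>
        (\<forall>s. symmetric_path V E src tgt s \<and> sublist u (Fpath V E src tgt F s) \<longrightarrow> e \<in> set s))"

definition support_edge where
  "support_edge V E src tgt e \<longleftrightarrow> e \<in> E \<and>
     collecting V E src tgt (src e) \<and> distributing V E src tgt (tgt e)"

definition scale where
  "scale V E src tgt F = Min {length (F e) | e. support_edge V E src tgt e}"

end

theory Submission
  imports Defs
begin

(* Let e be a support edge of a Rauzy scheme for a word W of period N, and
   suppose |F(e)| >= N.  Write x = F(e) = W[j, j+|x|).  Choose a window
   U = W[j, j+L) so long that, by periodicity, it contains the witness words of
   axiom (7) for every edge, and let t be a SHORTEST symmetric path with
   U a factor of F(t).  Axiom (4) applied to the one-edge path [e] shows that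
   every occurrence of x in F(t) comes from an occurrence of e in t; with
   minimality this forces t to start with e and F(t) to start with U.  The
   distributing vertex tgt(e) has two out-edges g = t!1 and e' (axiom (7) puts
   e' on t); e' is entered right after a later copy of e, ending before |U| by
   minimality.  Periodicity then makes the first letters of F(g) and F(e')
   coincide, contradicting axiom (2). *)

section \<open>Periodic infinite words\<close>

lemma periodic_shift:
  assumes "periodic_with W N"
  shows "W (a + q * N) = W a"
proof (induction q)
  case (Suc q)
  have "a + Suc q * N = (a + q * N) + N" by simp
  then show ?case using Suc assms unfolding periodic_with_def by metis
qed simp

lemma periodic_sub:
  assumes "periodic_with W N" and "N \<le> k"
  shows "W k = W (k - N)"
  using periodic_shift[OF assms(1), of "k - N" 1] assms(2) by simp

lemma periodic_mod_eq:
  assumes "periodic_with W N" and "a mod N = b mod N"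
  shows "W a = W b"
proof -
  have "W c = W (c mod N)" for c
    using periodic_shift[OF assms(1), of "c mod N" "c div N"] by (simp add: mod_div_mult_eq)
  then show ?thesis using assms(2) by metis
qed

lemma congruent_in_window:
  assumes N: "0 < (N::nat)"
  obtains k' where "j \<le> k'" "k' < j + N" "k' mod N = k mod N"
proof
  define r where "r = (k mod N + N - j mod N) mod N"
  show "j \<le> j + r" by simp
  show "j + r < j + N" using N by (simp add: r_def)
  have "(j + r) mod N = (j + (k mod N + N - j mod N)) mod N"
    unfolding r_def by (rule mod_add_right_eq)
  also have "\<dots> = (j mod N + (k mod N + N - j mod N)) mod N"
    by (rule mod_add_left_eq[symmetric])
  also have "j mod N + (k mod N + N - j mod N) = k mod N + N"
    using mod_less_divisor[OF N, of j] by simp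
  finally show "(j + r) mod N = k mod N" by simp
qed

lemma factor_in_window:
  assumes per: "periodic_with W N" and u: "factor_of_inf u W" and len: "length u + N \<le> L"
  shows "sublist u (map W [j..<j+L])"
proof -
  have N: "0 < N" using per by (simp add: periodic_with_def)
  obtain k where uk: "u = map W [k..<k + length u]" using u unfolding factor_of_inf_def by blast
  obtain k' where k': "j \<le> k'" "k' < j + N" "k' mod N = k mod N"
    using congruent_in_window[OF N] by blast
  have "map W [k'..<k' + length u] = map W [k..<k + length u]"
  proof (rule nth_equalityI)
    fix i assume i: "i < length (map W [k'..<k' + length u])"
    have "(k' + i) mod N = (k + i) mod N" using k'(3) by (metis mod_add_left_eq)
    then have "W (k' + i) = W (k + i)" by (rule periodic_mod_eq[OF per])
    then show "map W [k'..<k' + length u] ! i = map W [k..<k + length u] ! i" using i by simp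
  qed simp
  then have u': "u = map W [k'..<k' + length u]" using uk by simp
  have fits: "k' + length u \<le> j + L" using k' len by simp
  have "[j..<j+L] = [j..<k'] @ [k'..<j+L]"
    using upt_add_eq_append[of j k' "j + L - k'"] k'(1) fits by simp
  also have "[k'..<j+L] = [k'..<k' + length u] @ [k' + length u..<j+L]"
    using upt_add_eq_append[of k' "k' + length u" "j + L - (k' + length u)"] fits by simp
  finally have "map W [j..<j+L] = map W [j..<k'] @ u @ map W [k' + length u..<j+L]"
    using u' by simp
  then show ?thesis by (simp add: sublist_appendI)
qed

section \<open>Degrees and paths in graphs\<close>

lemma collecting_not_distributing:
  "collecting V E src tgt v \<Longrightarrow> \<not> distributing V E src tgt v"
  by (auto simp: collecting_def distributing_def)

lemma distributing_unique_in_edge: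
  assumes "distributing V E src tgt v" "e \<in> E" "f \<in> E" "tgt e = v" "tgt f = v"
  shows "e = f"
proof -
  have "card {e\<in>E. tgt e = v} = 1" using assms(1) by (simp add: distributing_def indeg_def)
  then obtain z where "{e\<in>E. tgt e = v} = {z}" by (auto simp: card_Suc_eq)
  then have "e \<in> {z}" "f \<in> {z}" using assms by blast+
  then show ?thesis by simp
qed

lemma distributing_other_out_edge:
  assumes v: "distributing V E src tgt v" and e: "e \<in> E" "src e = v"
  obtains f where "f \<in> E" "src f = v" "f \<noteq> e"
proof -
  have "{e\<in>E. src e = v} \<noteq> {e}" using v by (auto simp: distributing_def outdeg_def)
  then show ?thesis using that e by blast
qed

lemma collecting_other_in_edge:
  assumes v: "collecting V E src tgt v" and e: "e \<in> E" "tgt e = v"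
  obtains f where "f \<in> E" "tgt f = v" "f \<noteq> e"
proof -
  have "{e\<in>E. tgt e = v} \<noteq> {e}" using v by (auto simp: collecting_def indeg_def)
  then show ?thesis using that e by blast
qed

lemma path_nth: "is_path E src tgt t \<Longrightarrow> i < length t \<Longrightarrow> t ! i \<in> E"
  by (auto simp: is_path_def)

lemma path_link: "is_path E src tgt t \<Longrightarrow> Suc i < length t \<Longrightarrow> tgt (t ! i) = src (t ! Suc i)"
  by (auto simp: is_path_def)

lemma path_take: "is_path E src tgt t \<Longrightarrow> 0 < n \<Longrightarrow> is_path E src tgt (take n t)"
  unfolding is_path_def by (auto dest: in_set_takeD)

lemma path_drop:
  assumes t: "is_path E src tgt t" and n: "n < length t"
  shows "is_path E src tgt (drop n t)"
  unfolding is_path_def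
proof (intro conjI allI impI)
  show "drop n t \<noteq> []" using n by simp
  show "set (drop n t) \<subseteq> E" using t set_drop_subset[of n t] by (auto simp: is_path_def)
  fix i assume "i + 1 < length (drop n t)"
  then have "n + i + 1 < length t" by simp
  then show "tgt (drop n t ! i) = src (drop n t ! (i + 1))"
    using t n unfolding is_path_def by (simp add: add.assoc)
qed

section \<open>Rauzy schemes\<close>

locale rauzy =
  fixes W :: "nat \<Rightarrow> 'a" and V :: "'v set" and E :: "'e set" and src tgt :: "'e \<Rightarrow> 'v"
    and F B :: "'e \<Rightarrow> 'a list"
  assumes scheme: "rauzy_scheme W V E src tgt F B"
begin

abbreviation "distrib v \<equiv> distributing V E src tgt v"
abbreviation "collect v \<equiv> collecting V E src tgt v"
abbreviation "spath s \<equiv> symmetric_path V E src tgt s"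
abbreviation "supp e \<equiv> support_edge V E src tgt e"
abbreviation "Fp s \<equiv> Fpath V E src tgt F s"
abbreviation "Bp s \<equiv> Bpath V E src tgt B s"

lemma finite_E: "finite E"
  and endpoints_in_V: "e \<in> E \<Longrightarrow> src e \<in> V \<and> tgt e \<in> V"
  and vertex_kinds: "v \<in> V \<Longrightarrow> distrib v \<or> collect v"
  using scheme by (auto simp: rauzy_scheme_def graph_with_words_def)

lemma front_heads_distinct:
  "e \<in> E \<Longrightarrow> f \<in> E \<Longrightarrow> distrib (src e) \<Longrightarrow> src f = src e \<Longrightarrow> e \<noteq> f \<Longrightarrow>
   F e \<noteq> [] \<and> hd (F e) \<noteq> hd (F f)"
  using scheme endpoints_in_V unfolding rauzy_scheme_def by blast

lemma back_nonempty:
  assumes "e \<in> E" "collect (tgt e)"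
  shows "B e \<noteq> []"
proof -
  obtain f where "f \<in> E" "tgt f = tgt e" "f \<noteq> e" using collecting_other_in_edge assms by metis
  then show ?thesis using assms scheme endpoints_in_V unfolding rauzy_scheme_def by blast
qed

lemma symmetric_F_eq_B: "spath s \<Longrightarrow> Fp s = Bp s"
  using scheme unfolding rauzy_scheme_def by blast

lemma occurrences_transfer:
  "spath s1 \<Longrightarrow> spath s2 \<Longrightarrow> 1 \<le> k \<Longrightarrow> occurs_k (Fp s1) k (Fp s2) \<Longrightarrow> occurs_k s1 k s2"
  using scheme unfolding rauzy_scheme_def by blast

lemma edge_words_factors: "e \<in> E \<Longrightarrow> factor_of_inf (F e) W"
  using scheme unfolding rauzy_scheme_def by blast

lemma factors_covered: "factor_of_inf u W \<Longrightarrow> \<exists>s. spath s \<and> sublist u (Fp s)"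
  using scheme unfolding rauzy_scheme_def by blast

lemma edge_witnesses:
  obtains w where "\<And>e. e \<in> E \<Longrightarrow> factor_of_inf (w e) W"
    and "\<And>e s. e \<in> E \<Longrightarrow> spath s \<Longrightarrow> sublist (w e) (Fp s) \<Longrightarrow> e \<in> set s"
  using scheme unfolding rauzy_scheme_def by metis

text \<open>Edge words at a branching vertex are nonempty, since the vertex has a second edge.\<close>

lemma front_nonempty: "e \<in> E \<Longrightarrow> distrib (src e) \<Longrightarrow> F e \<noteq> []"
  by (metis distributing_other_out_edge front_heads_distinct)

definition front_words :: "'e list \<Rightarrow> 'a list" where
  "front_words xs = concat (map F (filter (\<lambda>e. distrib (src e)) xs))"

definition back_words :: "'e list \<Rightarrow> 'a list" where
  "back_words xs = concat (map B (filter (\<lambda>e. collect (tgt e)) xs))"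

lemma front_words_simps [simp]:
  "front_words [] = []" "front_words (xs @ ys) = front_words xs @ front_words ys"
  "front_words (a # xs) = (if distrib (src a) then F a @ front_words xs else front_words xs)"
  by (auto simp: front_words_def)

lemma back_words_simps [simp]:
  "back_words [] = []" "back_words (xs @ ys) = back_words xs @ back_words ys"
  "back_words (a # xs) = (if collect (tgt a) then B a @ back_words xs else back_words xs)"
  by (auto simp: back_words_def)

lemma Fp_eq: "Fp s = F (hd s) @ front_words (tl s)"
  by (simp add: Fpath_def front_words_def)

lemma Bp_eq: "Bp s = back_words (butlast s) @ B (last s)"
  by (simp add: Bpath_def back_words_def)

lemma symmetric_take:
  assumes t: "spath t" and i: "i < length t" and d: "distrib (tgt (t ! i))"
  shows "spath (take (Suc i) t)"
proof -
  have "last (take (Suc i) t) = t ! i" using i by (simp add: take_Suc_conv_app_nth)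
  moreover have "hd (take (Suc i) t) = hd t" using i by (simp add: hd_take)
  moreover have "is_path E src tgt (take (Suc i) t)"
    using path_take[of E src tgt t "Suc i"] t by (simp add: symmetric_path_def)
  ultimately show ?thesis using t d by (simp add: symmetric_path_def)
qed

lemma symmetric_drop: "spath t \<Longrightarrow> i < length t \<Longrightarrow> collect (src (t ! i)) \<Longrightarrow> spath (drop i t)"
  unfolding symmetric_path_def using path_drop by (auto simp: hd_drop_conv_nth last_drop)

section \<open>Support edges\<close>

lemma support_symmetric: "supp e \<Longrightarrow> spath [e]"
  by (simp add: support_edge_def symmetric_path_def is_path_def)

lemma support_F_eq_B: "supp e \<Longrightarrow> F e = B e"
  using symmetric_F_eq_B[OF support_symmetric] by (simp add: Fp_eq Bp_eq)

text \<open>The first edge of a symmetric path entering a distributing vertex is a support edge.\<close>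

lemma support_edge_exists: "\<exists>e. supp e"
proof -
  have "factor_of_inf [] W" by (simp add: factor_of_inf_def)
  then obtain s where "spath s" using factors_covered by blast
  then have ps: "is_path E src tgt s" and c0: "collect (src (hd s))" and dl: "distrib (tgt (last s))"
    by (auto simp: symmetric_path_def)
  have ne: "s \<noteq> []" using ps by (simp add: is_path_def)
  have ex: "\<exists>k. k < length s \<and> distrib (tgt (s ! k))"
    using ne dl by (metis last_conv_nth diff_less length_greater_0_conv zero_less_one)
  define k where "k = (LEAST k. k < length s \<and> distrib (tgt (s ! k)))"
  have k: "k < length s" "distrib (tgt (s ! k))" using LeastI_ex[OF ex] by (auto simp: k_def)
  have "collect (src (s ! k))"
  proof (cases k)
    case 0 then show ?thesis using c0 ne by (simp add: hd_conv_nth)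
  next
    case (Suc k')
    have "k' < (LEAST k. k < length s \<and> distrib (tgt (s ! k)))" using Suc k_def by simp
    then have "\<not> distrib (tgt (s ! k'))" using not_less_Least Suc k(1) by fastforce
    then show ?thesis using path_link[OF ps] path_nth[OF ps] Suc k endpoints_in_V vertex_kinds
      by (metis Suc_lessD)
  qed
  then show ?thesis using k path_nth[OF ps] by (auto simp: support_edge_def)
qed

text \<open>This uses axiom (3) on the prefix ending with \<open>e\<close>.\<close>

lemma front_split_at_support:
  assumes t: "spath t" and i: "i < length t" and ti: "t ! i = e" and e: "supp e"
  shows "Fp (take (Suc i) t) = back_words (take i t) @ F e"
    and "Fp t = back_words (take i t) @ F e @ front_words (drop (Suc i) t)"
    and "Fp (drop i t) = F e @ front_words (drop (Suc i) t)"
proof -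
  have dr: "drop i t = e # drop (Suc i) t" using i ti by (metis Cons_nth_drop_Suc)
  have ce: "\<not> distrib (src e)"
    using e collecting_not_distributing[of V E src tgt "src e"] by (simp add: support_edge_def)
  show "Fp (drop i t) = F e @ front_words (drop (Suc i) t)" by (simp add: dr Fp_eq)
  have tk: "take (Suc i) t = take i t @ [e]" using i ti by (simp add: take_Suc_conv_app_nth)
  have tt: "t = take i t @ e # drop (Suc i) t" using dr by (metis append_take_drop_id)
  show prefix: "Fp (take (Suc i) t) = back_words (take i t) @ F e"
  proof (cases "i = 0")
    case True then show ?thesis using tk by (simp add: Fp_eq)
  next
    case False
    have "spath (take (Suc i) t)" using symmetric_take[OF t i] ti e by (simp add: support_edge_def)
    then have "Fp (take (Suc i) t) = Bp (take (Suc i) t)" by (rule symmetric_F_eq_B)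
    then show ?thesis using tk support_F_eq_B[OF e] by (simp add: Bp_eq)
  qed
  have "Fp t = Fp (take (Suc i) t) @ front_words (drop (Suc i) t)"
    using ce tk by (subst tt, cases "take i t") (auto simp: Fp_eq)
  then show "Fp t = back_words (take i t) @ F e @ front_words (drop (Suc i) t)"
    using prefix by simp
qed

text \<open>The position of \<open>F(e)\<close> produced by the occurrence of \<open>e\<close> at index \<open>i\<close>.\<close>

definition support_position :: "'e list \<Rightarrow> nat \<Rightarrow> nat" where
  "support_position t i = length (back_words (take i t))"

lemma support_position_0 [simp]: "support_position t 0 = 0"
  by (simp add: support_position_def)

text \<open>Distinct occurrences of a support edge yield distinct positions, since the edge
  preceding a support edge ends at a collecting vertex and has a nonempty back word.\<close>

lemma support_position_strict_mono:
  assumes t: "spath t" and ii: "i < i'" "i' < length t" and ti: "t ! i' = e" and e: "supp e"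
  shows "support_position t i < support_position t i'"
proof -
  obtain k where k: "i' = Suc k" using ii by (cases i') auto
  have pt: "is_path E src tgt t" using t by (simp add: symmetric_path_def)
  have c: "collect (tgt (t ! k))" using path_link[OF pt] k ii ti e by (auto simp: support_edge_def)
  then have "B (t ! k) \<noteq> []" using back_nonempty path_nth[OF pt] k ii by simp
  then have "length (back_words (take k t)) < length (back_words (take i' t))"
    using k ii c by (simp add: take_Suc_conv_app_nth)
  moreover have "take k t = take i t @ take (k - i) (drop i t)"
    using k ii take_add[of i "k - i" t] by simp
  ultimately show ?thesis using k ii by (simp add: support_position_def)
qed

text \<open>Occurrences of \<open>e\<close> inject into
  occurrences of \<open>F(e)\<close>, and axiom (4) bounds the latter by the former.\<close>

lemma support_occurrence:
  assumes t: "spath t" and e: "supp e"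
    and k: "k + length (F e) \<le> length (Fp t)" "take (length (F e)) (drop k (Fp t)) = F e"
  shows "\<exists>i<length t. t ! i = e \<and> support_position t i = k"
proof -
  define Occ where "Occ = {k. k + length (F e) \<le> length (Fp t) \<and> take (length (F e)) (drop k (Fp t)) = F e}"
  define Idx where "Idx = {i. i + length [e] \<le> length t \<and> take (length [e]) (drop i t) = [e]}"
  have Idx_iff: "i \<in> Idx \<longleftrightarrow> i < length t \<and> t ! i = e" for i
    unfolding Idx_def by (auto simp: take_Suc_conv_app_nth hd_drop_conv_nth)
  have fin: "finite Occ" unfolding Occ_def by (rule finite_subset[of _ "{..length (Fp t)}"]) auto
  have kOcc: "k \<in> Occ" using k by (simp add: Occ_def)
  have sub: "support_position t ` Idx \<subseteq> Occ"
  proof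
    fix p assume "p \<in> support_position t ` Idx"
    then obtain i where "i < length t" "t ! i = e" "p = support_position t i" using Idx_iff by auto
    then show "p \<in> Occ"
      using front_split_at_support(2)[OF t _ _ e] by (simp add: Occ_def support_position_def)
  qed
  have inj: "inj_on (support_position t) Idx"
  proof (rule inj_onI)
    fix a b assume ab: "a \<in> Idx" "b \<in> Idx" "support_position t a = support_position t b"
    show "a = b"
    proof (rule ccontr)
      assume "a \<noteq> b"
      then have "a < b \<or> b < a" by arith
      then show False using ab Idx_iff support_position_strict_mono[OF t _ _ _ e] by (metis less_irrefl)
    qed
  qed
  have "Fp [e] = F e" by (simp add: Fp_eq)
  then have "occurs_k (Fp [e]) (card Occ) (Fp t)" by (simp add: occurs_k_def occ_def Occ_def)
  moreover have "1 \<le> card Occ" using kOcc fin by (simp add: Suc_le_eq card_gt_0_iff) blast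
  ultimately have "occurs_k [e] (card Occ) t"
    using occurrences_transfer[OF support_symmetric[OF e] t] by blast
  then have "card Occ \<le> card Idx" by (simp add: occurs_k_def occ_def Idx_def)
  also have "card Idx = card (support_position t ` Idx)" using inj by (simp add: card_image)
  finally have "support_position t ` Idx = Occ" by (rule card_seteq[OF fin sub])
  then obtain i where "i \<in> Idx" "support_position t i = k" using kOcc by (metis imageE)
  then show ?thesis using Idx_iff by blast
qed

section \<open>Shortest symmetric paths covering a word\<close>

definition shortest_cover :: "'a list \<Rightarrow> 'e list \<Rightarrow> bool" where
  "shortest_cover U t \<longleftrightarrow> spath t \<and> sublist U (Fp t) \<and>
     (\<forall>t'. spath t' \<and> sublist U (Fp t') \<longrightarrow> length t \<le> length t')"

lemma shortest_cover_exists: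
  assumes "factor_of_inf U W"
  obtains t where "shortest_cover U t"
  using factors_covered[OF assms] ex_has_least_nat[where m=length and P="\<lambda>s. spath s \<and> sublist U (Fp s)"]
  unfolding shortest_cover_def by metis

text \<open>If \<open>U\<close> starts with \<open>F(e)\<close> for a support edge \<open>e\<close>, a shortest cover of \<open>U\<close> starts
  with \<open>e\<close> and its front word starts with \<open>U\<close>: otherwise cutting before the copy of \<open>e\<close>
  producing the start of \<open>U\<close> would give a shorter cover.\<close>

lemma shortest_cover_start:
  assumes t: "shortest_cover U t" and e: "supp e" and pre: "prefix (F e) U"
  shows "t ! 0 = e" and "prefix U (Fp t)"
proof -
  have st: "spath t" using t by (simp add: shortest_cover_def)
  obtain P R where FP: "Fp t = P @ U @ R" using t by (auto simp: shortest_cover_def sublist_def)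
  obtain i where i: "i < length t" "t ! i = e" "support_position t i = length P"
    using support_occurrence[OF st e, of "length P"] pre FP by (auto simp: prefix_def)
  have "i = 0"
  proof (rule ccontr)
    assume "i \<noteq> 0"
    have "spath (drop i t)"
      using symmetric_drop[OF st i(1)] i(2) e by (simp add: support_edge_def)
    moreover have "Fp (drop i t) = U @ R"
      using front_split_at_support(2,3)[OF st i(1,2) e] FP i(3) by (simp add: support_position_def)
    ultimately have "length t \<le> length (drop i t)"
      using t unfolding shortest_cover_def by (metis sublist_appendI append_Nil)
    then show False using \<open>i \<noteq> 0\<close> i(1) by simp
  qed
  then show "t ! 0 = e" and "prefix U (Fp t)" using i FP by auto
qed

text \<open>A later copy of \<open>e\<close> that is not the last edge produces its \<open>F(e)\<close> strictly inside
  the prefix \<open>U\<close>, since otherwise the path cut after that copy would be a shorter cover.\<close>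

lemma shortest_cover_later_copy:
  assumes t: "shortest_cover U t" and e: "supp e" and U: "prefix U (Fp t)"
    and i: "Suc i < length t" "t ! i = e"
  shows "support_position t i + length (F e) < length U"
proof (rule ccontr)
  assume long: "\<not> support_position t i + length (F e) < length U"
  have st: "spath t" using t by (simp add: shortest_cover_def)
  have cut: "spath (take (Suc i) t)"
    using symmetric_take[OF st] i e by (simp add: support_edge_def)
  have "Fp t = Fp (take (Suc i) t) @ front_words (drop (Suc i) t)"
    using front_split_at_support(1,2)[OF st _ i(2) e] i(1) by simp
  then have "prefix (Fp (take (Suc i) t)) (Fp t)" by simp
  moreover have "length U \<le> length (Fp (take (Suc i) t))"
    using long front_split_at_support(1)[OF st _ i(2) e] i(1) by (simp add: support_position_def)
  ultimately have "prefix U (Fp (take (Suc i) t))" using U prefix_length_prefix by blast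
  then have "sublist U (Fp (take (Suc i) t))" by (rule prefix_imp_sublist)
  then have "length t \<le> length (take (Suc i) t)"
    using t cut unfolding shortest_cover_def by blast
  then show False using i(1) by simp
qed

text \<open>The letter following the \<open>F(e)\<close> of a copy of a support edge is the first letter of
  the front word of the next edge, which leaves the distributing vertex \<open>tgt e\<close>.\<close>

lemma letter_after_support:
  assumes t: "spath t" and e: "supp e" and i: "Suc i < length t" "t ! i = e"
  shows "Fp t ! (support_position t i + length (F e)) = hd (F (t ! Suc i))"
proof -
  have pt: "is_path E src tgt t" using t by (simp add: symmetric_path_def)
  have d: "distrib (src (t ! Suc i))" using path_link[OF pt i(1)] i e by (simp add: support_edge_def)
  then have "F (t ! Suc i) \<noteq> []" using front_nonempty path_nth[OF pt i(1)] by simp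
  moreover have "drop (Suc i) t = t ! Suc i # drop (Suc (Suc i)) t" using i(1) by (rule Cons_nth_drop_Suc[symmetric])
  ultimately show ?thesis using front_split_at_support(2)[OF t _ i(2) e] i(1) d
    by (simp add: support_position_def nth_append hd_conv_nth)
qed

lemma letter_inside_support:
  assumes t: "spath t" and e: "supp e" and i: "i < length t" "t ! i = e" and k: "k < length (F e)"
  shows "Fp t ! (support_position t i + k) = F e ! k"
proof -
  have "Fp t = back_words (take i t) @ F e @ front_words (drop (Suc i) t)"
    using front_split_at_support(2)[OF t i e] .
  then have "Fp t ! (support_position t i + k) = (F e @ front_words (drop (Suc i) t)) ! k"
    by (simp only: support_position_def nth_append_length_plus)
  then show ?thesis using k by (simp add: nth_append)
qed

lemma shortest_cover_branching:
  assumes t: "shortest_cover U t" and e: "supp e" and pre: "prefix (F e) U"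
    and longer: "length (F e) < length U" and visits: "E \<subseteq> set t"
  obtains g e' i where "g \<in> E" "e' \<in> E" "src g = tgt e" "src e' = tgt e" "g \<noteq> e'"
    and "hd (F g) = Fp t ! length (F e)"
    and "i < length t" "t ! i = e" "support_position t i + length (F e) < length U"
    and "hd (F e') = Fp t ! (support_position t i + length (F e))"
proof -
  have st: "spath t" using t by (simp add: shortest_cover_def)
  have pt: "is_path E src tgt t" using st by (simp add: symmetric_path_def)
  have eE: "e \<in> E" and de: "distrib (tgt e)" using e by (auto simp: support_edge_def)
  have t0: "t ! 0 = e" and U: "prefix U (Fp t)" using shortest_cover_start[OF t e pre] by auto
  have len_t: "1 < length t"
  proof (rule ccontr)
    assume "\<not> 1 < length t"
    then have "Fp t = F e" using t0 pt by (cases t) (auto simp: is_path_def Fp_eq)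
    then show False using U longer prefix_length_le by fastforce
  qed
  define g where "g = t ! 1"
  have gE: "g \<in> E" and sg: "src g = tgt e"
    using path_nth[OF pt len_t] path_link[OF pt, of 0] len_t t0 by (simp_all add: g_def)
  obtain e' where e': "e' \<in> E" "src e' = tgt e" "e' \<noteq> g"
    using distributing_other_out_edge[OF de gE sg] by blast
  then obtain m where m: "m < length t" "t ! m = e'" using visits by (metis in_set_conv_nth subsetD)
  have "m \<noteq> 0"
  proof
    assume "m = 0"
    then have "src e = tgt e" using t0 m e'(2) by simp
    then show False
      using e collecting_not_distributing[of V E src tgt "src e"] by (simp add: support_edge_def)
  qed
  then obtain i where i: "m = Suc i" using not0_implies_Suc by blast
  have "tgt (t ! i) = tgt e" using path_link[OF pt] m i e' by auto
  then have ti: "t ! i = e"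
    using distributing_unique_in_edge[OF de path_nth[OF pt] eE] m i by simp
  show thesis
  proof (rule that[OF gE e'(1) sg e'(2) e'(3)[symmetric] _ _ ti])
    show "i < length t" using m i by simp
    show "hd (F g) = Fp t ! length (F e)"
      using letter_after_support[OF st e, of 0] len_t t0 by (simp add: g_def)
    show "support_position t i + length (F e) < length U"
      using shortest_cover_later_copy[OF t e U _ ti] m i by simp
    show "hd (F e') = Fp t ! (support_position t i + length (F e))"
      using letter_after_support[OF st e _ ti] m i by simp
  qed
qed

section \<open>Support edges are shorter than the period\<close>

text \<open>By periodicity, a long enough window of \<open>W\<close> contains the witness word of axiom (7)
  of every edge, so every symmetric path covering the window visits every edge.\<close>

lemma long_windows_visit_every_edge:
  assumes per: "periodic_with W N"
  obtains L0 where "\<And>L j s. L0 \<le> L \<Longrightarrow> spath s \<Longrightarrow>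
    sublist (map W [j..<j+L]) (Fp s) \<Longrightarrow> E \<subseteq> set s"
proof -
  obtain w where wfac: "\<And>f. f \<in> E \<Longrightarrow> factor_of_inf (w f) W"
    and wvisit: "\<And>f s. f \<in> E \<Longrightarrow> spath s \<Longrightarrow> sublist (w f) (Fp s) \<Longrightarrow> f \<in> set s"
    using edge_witnesses by blast
  define L0 where "L0 = (\<Sum>f\<in>E. length (w f)) + N"
  have "f \<in> set s" if "L0 \<le> L" "f \<in> E" "spath s" "sublist (map W [j..<j+L]) (Fp s)" for L j s f
  proof -
    have "length (w f) \<le> (\<Sum>f\<in>E. length (w f))"
      using that(2) finite_E by (intro member_le_sum) auto
    then have "sublist (w f) (map W [j..<j+L])"
      using that(1) factor_in_window[OF per wfac[OF that(2)]] by (simp add: L0_def)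
    then show ?thesis using that wvisit sublist_order.order.trans by blast
  qed
  then show ?thesis using that by blast
qed

text \<open>Let \<open>F(e) = W[j, j+n)\<close> with \<open>N \<le> n\<close>, and take a shortest cover of a
  window \<open>W[j, j+L)\<close> visiting every edge.  The letter after a later copy of \<open>F(e)\<close>, at position
  \<open>p + n\<close>, equals by periodicity the letter at \<open>p + n - N\<close>, which lies in that copy and so is
  \<open>W(j + n - N) = W(j + n)\<close>, the letter after the initial \<open>F(e)\<close>: two out-edges of \<open>tgt e\<close>
  would have front words with the same first letter.\<close>

theorem support_edge_shorter_than_period:
  assumes per: "periodic_with W N" and e: "supp e"
  shows "length (F e) < N"
proof (rule ccontr)
  assume "\<not> length (F e) < N"
  obtain j n where x: "F e = map W [j..<j + n]" and n: "n = length (F e)"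
    using edge_words_factors e unfolding factor_of_inf_def support_edge_def by blast
  have big: "N \<le> n" and N: "0 < N"
    using \<open>\<not> length (F e) < N\<close> n per by (auto simp: periodic_with_def)
  obtain L0 where visit: "\<And>L j s. L0 \<le> L \<Longrightarrow> spath s \<Longrightarrow>
      sublist (map W [j..<j+L]) (Fp s) \<Longrightarrow> E \<subseteq> set s"
    using long_windows_visit_every_edge[OF per] by blast
  define L where "L = L0 + n + 1"
  define U where "U = map W [j..<j + L]"
  have "factor_of_inf U W" by (auto simp: U_def factor_of_inf_def)
  then obtain t where t: "shortest_cover U t" by (rule shortest_cover_exists)
  have st: "spath t" using t by (simp add: shortest_cover_def)
  have "take n U = F e" by (simp add: x U_def L_def take_map)
  then have pre: "prefix (F e) U" by (metis take_is_prefix)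
  have "E \<subseteq> set t" using visit[of L t j] st t by (simp add: L_def U_def shortest_cover_def)
  moreover have "length (F e) < length U" using n by (simp add: U_def L_def)
  ultimately obtain g e' i where ge': "g \<in> E" "e' \<in> E" "src g = tgt e" "src e' = tgt e" "g \<noteq> e'"
      and hd_g: "hd (F g) = Fp t ! n"
      and i: "i < length t" "t ! i = e" and inside: "support_position t i + n < length U"
      and hd_e': "hd (F e') = Fp t ! (support_position t i + n)"
    using shortest_cover_branching[OF t e pre] n by blast
  obtain R where "Fp t = U @ R" using shortest_cover_start(2)[OF t e pre] by (auto simp: prefix_def)
  then have Fp_nth: "Fp t ! k = W (j + k)" if "k < length U" for k
    using that by (simp add: nth_append U_def)
  define p where "p = support_position t i"
  have "n - N < length (F e)" using N big n by linarith
  then have "Fp t ! (p + (n - N)) = W (j + (n - N))"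
    using letter_inside_support[OF st e i] by (simp add: p_def x)
  moreover have "p + (n - N) = p + n - N" using big by simp
  ultimately have shifted: "W (j + (p + n - N)) = W (j + (n - N))"
    using Fp_nth[of "p + (n - N)"] inside by (simp add: p_def)
  have "hd (F e') = W (j + (p + n - N))"
    using hd_e' Fp_nth[OF inside] periodic_sub[OF per, of "j + (p + n)"] big by (simp add: p_def)
  also have "\<dots> = W (j + (n - N))" by (rule shifted)
  also have "\<dots> = hd (F g)"
    using hd_g Fp_nth[of n] periodic_sub[OF per, of "j + n"] big by (simp add: U_def L_def)
  finally show False using front_heads_distinct[OF ge'(1,2)] ge' e
    by (simp add: support_edge_def)
qed

lemma scale_attained: "\<exists>e. supp e \<and> scale V E src tgt F = length (F e)"
proof -
  have "{length (F e) | e. supp e} \<subseteq> (\<lambda>e. length (F e)) ` E" by (auto simp: support_edge_def)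
  then have "finite {length (F e) | e. supp e}" using finite_E by (meson finite_imageI finite_subset)
  moreover have "{length (F e) | e. supp e} \<noteq> {}" using support_edge_exists by blast
  ultimately show ?thesis unfolding scale_def using Min_in by fastforce
qed

end

theorem corollary6p9:
  fixes W :: "nat \<Rightarrow> 'a" and N :: nat
    and V :: "'v set" and E :: "'e set" and src tgt :: "'e \<Rightarrow> 'v"
    and F B :: "'e \<Rightarrow> 'a list"
  assumes "periodic_with W N"
    and "rauzy_scheme W V E src tgt F B"
  shows "scale V E src tgt F < N"
proof -
  interpret rauzy W V E src tgt F B by unfold_locales (rule assms(2))
  obtain e where "supp e" and "scale V E src tgt F = length (F e)"
    using scale_attained by blast
  then show ?thesis using support_edge_shorter_than_period[OF assms(1)] by simp
qed

end
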